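(* Let $k\in\mathbb{N}$ and let $x_1,\ldots,x_k$ be positive reals with $x_1+\cdots+x_k<1$, $x_1\ge x_2\ge\cdots\ge x_k$, and $x_1\cdots x_j \le 1 - \sum_{i=1}^j x_i$ for all $j\in\{1,\ldots,k\}$. Then \[ x_1+\cdots+x_k \le \frac1{s_1}+\cdots+\frac1{s_k}, \] with equality if and only if $x_i = 1/s_i$ for all $i\in\{1,\ldots,k\}$.
   Context: The Sylvester sequence: $s_1 = 2$, $s_i = \prod_{j=1}^{i-1} s_j + 1$ for $i\ge2$. *)

theory Defs
  imports Complex_Main
begin

text \<open>Sylvester sequence, 1-indexed: s 1 = 2, s i = (prod_{j=1}^{i-1} s j) + 1 for i >= 2.
  The value at 0 is an irrelevant convention (we set it to 1).\<close>
fun sylvester :: "nat \<Rightarrow> nat" where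
  "sylvester 0 = 1"
| "sylvester (Suc 0) = 2"
| "sylvester (Suc (Suc n)) = (\<Prod>j=1..Suc n. sylvester j) + 1"

end

theory Submission
  imports Defs
begin

text \<open>Write \<open>y\<^sub>i = 1/s\<^sub>i\<close>. The Sylvester recursion telescopes to
  \<open>1 - (y\<^sub>1 + \<dots> + y\<^sub>j) = y\<^sub>1 \<cdots> y\<^sub>j\<close>, so the \<open>y\<^sub>i\<close> satisfy the product constraint with
  equality. Suppose \<open>x\<^sub>1 + \<dots> + x\<^sub>j \<ge> y\<^sub>1 + \<dots> + y\<^sub>j\<close> for the first \<open>j\<close> where this
  happens. Then all tail sums of \<open>x\<^sub>l - y\<^sub>l\<close> over \<open>{i..j}\<close> are nonnegative, and since the
  weights \<open>1/x\<^sub>l\<close> increase, Abel summation gives \<open>\<Sum> (x\<^sub>l - y\<^sub>l)/x\<^sub>l \<ge> 0\<close>. The product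
  constraint gives \<open>\<Prod> x\<^sub>l \<le> \<Prod> y\<^sub>l\<close>. Setting \<open>t\<^sub>l = y\<^sub>l/x\<^sub>l\<close>, these say
  \<open>\<Sum> ln t\<^sub>l \<ge> 0 \<ge> \<Sum> (t\<^sub>l - 1)\<close>, which together with \<open>ln t \<le> t - 1\<close> forces every
  \<open>t\<^sub>l = 1\<close>.\<close>

lemma sylvester_Suc: "sylvester (Suc j) = (\<Prod>i=1..j. sylvester i) + 1"
  by (cases j) auto

lemma sylvester_ge_1: "sylvester i \<ge> 1"
  by (cases i) (auto simp: sylvester_Suc)

lemma one_minus_sum_inverse_sylvester:
  "1 - (\<Sum>i=1..j. 1 / real (sylvester i)) = (\<Prod>i=1..j. 1 / real (sylvester i))"
proof (induction j)
  case 0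
  then show ?case by simp
next
  case (Suc j)
  define p where "p = real (\<Prod>i=1..j. sylvester i)"
  have "p \<ge> 1"
    unfolding p_def by (metis of_nat_1 of_nat_le_iff prod_ge_1 sylvester_ge_1)
  have prod_eq: "(\<Prod>i=1..j. 1 / real (sylvester i)) = 1 / p"
    unfolding p_def by (simp add: prod_dividef)
  have next_eq: "real (sylvester (Suc j)) = p + 1"
    unfolding p_def by (simp add: sylvester_Suc)
  have "1 - (\<Sum>i=1..Suc j. 1 / real (sylvester i))
      = (1 - (\<Sum>i=1..j. 1 / real (sylvester i))) - 1 / real (sylvester (Suc j))"
    by simp
  also have "\<dots> = 1/p - 1/(p + 1)"
    using Suc prod_eq next_eq by simp
  also have "\<dots> = 1/p * (1/(p + 1))"
    using \<open>p \<ge> 1\<close> by (simp add: field_simps)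
  also have "\<dots> = (\<Prod>i=1..Suc j. 1 / real (sylvester i))"
    using prod_eq next_eq by simp
  finally show ?case .
qed

lemma sum_mult_nonneg_if_tail_sums_nonneg:
  fixes d c :: "nat \<Rightarrow> 'a :: linordered_idom"
  assumes mono: "\<And>l. 1 \<le> l \<Longrightarrow> l < n \<Longrightarrow> c l \<le> c (Suc l)"
    and nonneg: "\<And>l. 1 \<le> l \<Longrightarrow> l \<le> n \<Longrightarrow> c l \<ge> 0"
    and tails: "\<And>i. 1 \<le> i \<Longrightarrow> i \<le> n \<Longrightarrow> (\<Sum>l=i..n. d l) \<ge> 0"
  shows "(\<Sum>l=1..n. d l * c l) \<ge> 0"
proof -
  have tails': "(\<Sum>l=i..n. d l) \<ge> 0" if "1 \<le> i" for i
    using tails[OF that] by (cases "i \<le> n") auto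
  have "(\<Sum>l=i..n. d l * c l) \<ge> c i * (\<Sum>l=i..n. d l)" if "i \<le> n + 1" "1 \<le> i" for i
    using that
  proof (induction i rule: inc_induct)
    case base
    then show ?case by simp
  next
    case (step m)
    have "c m * (\<Sum>l=Suc m..n. d l) \<le> c (Suc m) * (\<Sum>l=Suc m..n. d l)"
      using mono[of m] step.prems tails'[of "Suc m"]
      by (cases "m < n") (auto intro: mult_right_mono)
    also have "\<dots> \<le> (\<Sum>l=Suc m..n. d l * c l)"
      using step by simp
    finally show ?case
      using step.hyps by (simp add: sum.atLeast_Suc_atMost algebra_simps)
  qed
  from this[of 1] have "c 1 * (\<Sum>l=1..n. d l) \<le> (\<Sum>l=1..n. d l * c l)"
    by simp
  moreover have "c 1 * (\<Sum>l=1..n. d l) \<ge> 0"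
    using nonneg[of 1] tails'[of 1] by (cases "n = 0") (simp_all add: zero_le_mult_iff)
  ultimately show ?thesis
    by linarith
qed

lemma eq_if_prod_le_and_sum_relative_diff_nonneg:
  fixes a b :: "'i \<Rightarrow> real"
  assumes "finite A"
    and pos: "\<And>l. l \<in> A \<Longrightarrow> a l > 0" "\<And>l. l \<in> A \<Longrightarrow> b l > 0"
    and prod_le: "(\<Prod>l\<in>A. a l) \<le> (\<Prod>l\<in>A. b l)"
    and relative_diff_nonneg: "(\<Sum>l\<in>A. (a l - b l) / a l) \<ge> 0"
  shows "\<forall>l\<in>A. a l = b l"
proof -
  define t where "t l = b l / a l" for l
  have t_pos: "t l > 0" if "l \<in> A" for l
    using pos[OF that] by (simp add: t_def)
  have "(\<Prod>l\<in>A. t l) \<ge> 1"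
    using prod_le prod_pos[of A a] pos by (simp add: t_def prod_dividef)
  moreover have "ln (\<Prod>l\<in>A. t l) = (\<Sum>l\<in>A. ln (t l))"
    using \<open>finite A\<close> t_pos by (intro ln_prod) fastforce+
  ultimately have "(\<Sum>l\<in>A. ln (t l)) \<ge> 0"
    by (metis ln_ge_zero)
  moreover have "(\<Sum>l\<in>A. (a l - b l) / a l) = (\<Sum>l\<in>A. 1 - t l)"
    using pos by (intro sum.cong) (fastforce simp: t_def diff_divide_distrib)+
  ultimately have "(\<Sum>l\<in>A. t l - 1 - ln (t l)) \<le> 0"
    using relative_diff_nonneg by (simp add: sum_subtractf)
  moreover have gap_nonneg: "t l - 1 - ln (t l) \<ge> 0" if "l \<in> A" for l
    using ln_le_minus_one[OF t_pos[OF that]] by simp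
  ultimately have "(\<Sum>l\<in>A. t l - 1 - ln (t l)) = 0"
    by (meson antisym sum_nonneg)
  then have "\<forall>l\<in>A. t l - 1 - ln (t l) = 0"
    using sum_nonneg_eq_0_iff[OF \<open>finite A\<close> gap_nonneg] by simp
  then show ?thesis
    using pos t_pos ln_eq_minus_one by (fastforce simp: t_def)
qed

lemma eq_inverse_sylvester_if_sum_ge:
  fixes k :: nat and x :: "nat \<Rightarrow> real"
  assumes pos: "\<And>i. i \<in> {1..k} \<Longrightarrow> x i > 0"
    and noninc: "\<And>i. 1 \<le> i \<Longrightarrow> i < k \<Longrightarrow> x (Suc i) \<le> x i"
    and prodle: "\<And>j. j \<in> {1..k} \<Longrightarrow> (\<Prod>i=1..j. x i) \<le> 1 - (\<Sum>i=1..j. x i)"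
    and sum_ge: "(\<Sum>i=1..k. x i) \<ge> (\<Sum>i=1..k. 1 / real (sylvester i))"
  shows "\<forall>i\<in>{1..k}. x i = 1 / real (sylvester i)"
  using assms
proof (induction k rule: less_induct)
  case (less k)
  define y where "y i = 1 / real (sylvester i)" for i
  have y_pos: "y i > 0" for i
    using sylvester_ge_1[of i] by (simp add: y_def)
  have earlier_le: "(\<Sum>l=1..i. x l) \<le> (\<Sum>l=1..i. y l)" if "i < k" for i
  proof (rule ccontr)
    assume "\<not> ?thesis"
    then have "\<forall>l\<in>{1..i}. x l = y l"
      unfolding y_def using that less.prems(1-3) by (intro less.IH) auto
    with \<open>\<not> ?thesis\<close> show False
      by simp
  qed
  have tails: "(\<Sum>l=i..k. x l - y l) \<ge> 0" if "1 \<le> i" "i \<le> k" for i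
  proof -
    have "(\<Sum>l=1..k. x l - y l) = (\<Sum>l=1..i-1. x l - y l) + (\<Sum>l=i..k. x l - y l)"
      using sum.ub_add_nat[of 1 "i - 1" "\<lambda>l. x l - y l" "k - (i - 1)"] that by simp
    moreover have "(\<Sum>l=1..i-1. x l) \<le> (\<Sum>l=1..i-1. y l)"
      using earlier_le that by simp
    ultimately show ?thesis
      using less.prems(4) by (simp add: sum_subtractf y_def)
  qed
  have "(\<Sum>l=1..k. (x l - y l) * (1 / x l)) \<ge> 0"
  proof (rule sum_mult_nonneg_if_tail_sums_nonneg)
    fix l assume "1 \<le> l" "l < k"
    then show "1 / x l \<le> 1 / x (Suc l)"
      using less.prems(1,2) by (simp add: frac_le)
  next
    fix l assume "1 \<le> l" "l \<le> k"
    then show "0 \<le> 1 / x l"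
      using less.prems(1) by (simp add: less_imp_le)
  next
    fix i assume "1 \<le> i" "i \<le> k"
    then show "0 \<le> (\<Sum>l=i..k. x l - y l)"
      by (rule tails)
  qed
  then have "(\<Sum>l\<in>{1..k}. (x l - y l) / x l) \<ge> 0"
    by simp
  moreover have "(\<Prod>l\<in>{1..k}. x l) \<le> (\<Prod>l\<in>{1..k}. y l)"
  proof (cases "k = 0")
    case True
    then show ?thesis
      by simp
  next
    case False
    then have "(\<Prod>l=1..k. x l) \<le> 1 - (\<Sum>l=1..k. y l)"
      using less.prems(3)[of k] less.prems(4) by (simp add: y_def)
    then show ?thesis
      using one_minus_sum_inverse_sylvester[of k] unfolding y_def by linarith
  qed
  ultimately have "\<forall>l\<in>{1..k}. x l = y l"
    using less.prems(1) y_pos by (intro eq_if_prod_le_and_sum_relative_diff_nonneg) auto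
  then show ?case
    by (simp add: y_def)
qed

theorem mainTheorem14:
  fixes k :: nat and x :: "nat \<Rightarrow> real"
  assumes pos: "\<And>i. i \<in> {1..k} \<Longrightarrow> x i > 0"
    and sumlt: "(\<Sum>i=1..k. x i) < 1"
    and noninc: "\<And>i. 1 \<le> i \<Longrightarrow> i < k \<Longrightarrow> x (Suc i) \<le> x i"
    and prodle: "\<And>j. j \<in> {1..k} \<Longrightarrow> (\<Prod>i=1..j. x i) \<le> 1 - (\<Sum>i=1..j. x i)"
  shows "(\<Sum>i=1..k. x i) \<le> (\<Sum>i=1..k. 1 / real (sylvester i))
       \<and> ((\<Sum>i=1..k. x i) = (\<Sum>i=1..k. 1 / real (sylvester i))
           \<longleftrightarrow> (\<forall>i\<in>{1..k}. x i = 1 / real (sylvester i)))"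
proof -
  have rigid: "(\<Sum>i=1..k. x i) \<ge> (\<Sum>i=1..k. 1 / real (sylvester i))
      \<Longrightarrow> \<forall>i\<in>{1..k}. x i = 1 / real (sylvester i)"
    using eq_inverse_sylvester_if_sum_ge[OF pos noninc prodle] by blast
  then have "(\<Sum>i=1..k. x i) \<le> (\<Sum>i=1..k. 1 / real (sylvester i))"
    by (cases "(\<Sum>i=1..k. x i) \<le> (\<Sum>i=1..k. 1 / real (sylvester i))") auto
  with rigid show ?thesis
    by auto
qed

end
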